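(* For every integer $n\ge 0$, \[ d_{n,q}(x)=\sum_{l=0}^{n}\Bigg(\sum_{m=l}^{n}(-1)^m\frac{2^{2m-l}}{m!}S_1(m,l)\,d_{n-m,q}\Bigg)x^l. \]
   Context: Let $p$ be a fixed odd prime, $\mathbb{C}_p$ the completion of the algebraic closure of $\mathbb{Q}_p$, with $|p|_p=1/p$. Let $q\in\mathbb{C}_p$ with $|1-q|_p<p^{-1/(p-1)}$, and $\log$ the $p$-adic logarithm. The numbers $d_{n,q}$ are defined by \[ \frac{q-1+\frac{q-1}{\log q}\cdot\frac12\log(1-4t)}{q\sqrt{1-4t}-1}=\sum_{n=0}^{\infty}d_{n,q}t^n, \] and the ($q$-analogue) Catalan–Daehee polynomials $d_{n,q}(x)$ are defined by \[ \frac{q-1+\frac{q-1}{\log q}\cdot\frac12\log(1-4t)}{q\sqrt{1-4t}-1}(1-4t)^{x/2}=\sum_{n=0}^{\infty}d_{n,q}(x)t^n, \] for $t\in\mathbb{C}_p$ with $|t|_p<p^{-1/(p-1)}$, where $(1-4t)^{x/2}=\exp\big(\tfrac{x}{2}\log(1-4t)\big)$. $S_1(m,l)$ are the Stirling numbers of the first kind: $(x)_m=\sum_{l=0}^m S_1(m,l)x^l$, with $(x)_0=1$, $(x)_m=x(x-1)\cdots(x-m+1)$. *)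

theory Defs
  imports "HOL-Computational_Algebra.Computational_Algebra"
begin

text \<open>Stirling numbers of the first kind (signed):
  (x)_m = \<Sum>l. S1 m l * x^l, (x)_m = x(x-1)...(x-m+1).\<close>
definition S1 :: "nat \<Rightarrow> nat \<Rightarrow> int" where
  "S1 m l = coeff (\<Prod>i<m. [:- of_nat i, 1:]) l"

definition log_1m4t :: "'a::field_char_0 fps" where
  "log_1m4t = fps_ln 1 oo (- fps_const 4 * fps_X)"

definition pow_1m4t :: "'a::field_char_0 \<Rightarrow> 'a fps" where
  "pow_1m4t a = fps_exp 1 oo (fps_const a * log_1m4t)"

text \<open>Generating function of d_{n,q}; lq plays the role of log q.\<close>
definition gen_d :: "'a::field_char_0 \<Rightarrow> 'a \<Rightarrow> 'a fps" where
  "gen_d q lq = (fps_const (q - 1) + fps_const ((q - 1) / lq) * fps_const (1/2) * log_1m4t)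
                / (fps_const q * pow_1m4t (1/2) - 1)"

definition d_num :: "nat \<Rightarrow> 'a::field_char_0 \<Rightarrow> 'a \<Rightarrow> 'a" where
  "d_num n q lq = gen_d q lq $ n"

definition d_poly :: "nat \<Rightarrow> 'a::field_char_0 \<Rightarrow> 'a \<Rightarrow> 'a \<Rightarrow> 'a" where
  "d_poly n q lq x = (gen_d q lq * pow_1m4t (x / 2)) $ n"

end

theory Submission
  imports Defs
begin

text \<open>Since exp(a log(1 + X)) = (1 + X)^a, the coefficient of t^m in (1 - 4t)^(x/2) is
  (-4)^m (x/2 choose m) = (-4)^m/m! (x/2)(x/2 - 1)...(x/2 - m + 1), and expanding this falling
  factorial by Stirling numbers of the first kind turns it into a polynomial in x.
  The Cauchy product with the generating function of the d_{n,q} and an exchange of the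
  two finite sums give the formula; no property of that generating function is used.\<close>

lemma fps_exp_compose_ln_eq_binomial:
  "fps_exp 1 oo (fps_const (a::'a::field_char_0) * fps_ln 1) = fps_binomial a"
proof -
  let ?E = "fps_exp 1 oo (fps_const a * fps_ln 1)"
  have "fps_deriv ?E = fps_const a * ?E / (1 + fps_X)"
    by (subst fps_compose_deriv) (simp_all add: fps_ln_deriv fps_divide_def)
  moreover have "?E $ 0 = 1"
    by (simp add: fps_compose_nth)
  ultimately show ?thesis
    using fps_binomial_ODE_unique' by blast
qed

lemma pow_1m4t_nth: "pow_1m4t (a::'a::field_char_0) $ m = (a gchoose m) * (-4) ^ m"
proof -
  have "pow_1m4t a = fps_exp 1 oo ((fps_const a * fps_ln 1) oo (fps_const (-4) * fps_X))"
    unfolding pow_1m4t_def log_1m4t_def by (simp add: fps_const_mult_apply_left fps_const_neg)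
  also have "\<dots> = fps_binomial a oo (fps_const (-4) * fps_X)"
    by (subst fps_compose_assoc) (simp_all add: fps_exp_compose_ln_eq_binomial)
  finally show ?thesis
    by (simp add: fps_compose_linear)
qed

lemma map_poly_of_int_mult:
  "map_poly (of_int :: int \<Rightarrow> 'a::comm_ring_1) (p * q) = map_poly of_int p * map_poly of_int q"
  by (rule poly_eqI) (simp add: coeff_map_poly coeff_mult)

lemma falling_factorial_eq_S1_sum:
  "(\<Prod>i<m. y - of_nat i) = (\<Sum>l\<le>m. of_int (S1 m l) * (y::'a::comm_ring_1) ^ l)"
proof -
  let ?P = "\<Prod>i<m. [:- of_nat i, 1::int:]"
  have map_P: "map_poly (of_int :: int \<Rightarrow> 'a) ?P = (\<Prod>i<m. [:- of_nat i, 1:])"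
  proof (induction m)
    case (Suc m)
    then show ?case
      by (simp only: prod.lessThan_Suc map_poly_of_int_mult) (simp add: map_poly_pCons)
  qed simp
  have "degree ?P \<le> m"
    using degree_prod_sum_le [of "{..<m}" "\<lambda>i. [:- of_nat i, 1::int:]"] by (simp add: o_def)
  then have "degree (map_poly (of_int :: int \<Rightarrow> 'a) ?P) \<le> m"
    by (intro degree_le) (auto simp: coeff_map_poly coeff_eq_0)
  then have "poly (map_poly of_int ?P) y = poly (\<Sum>l\<le>m. monom (of_int (coeff ?P l)) l) y"
    by (subst poly_as_sum_of_monoms' [symmetric]) (simp_all add: coeff_map_poly)
  then show ?thesis
    by (simp add: map_P poly_prod poly_sum poly_monom S1_def)
qed

lemma pow_1m4t_half_nth:
  "pow_1m4t ((x::'a::field_char_0) / 2) $ m =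
     (\<Sum>l=0..m. (-1) ^ m * 2 ^ (2 * m - l) / fact m * of_int (S1 m l) * x ^ l)"
proof -
  have "pow_1m4t (x / 2) $ m = (-4) ^ m / fact m * ((x / 2 gchoose m) * fact m)"
    by (simp add: pow_1m4t_nth)
  also have "\<dots> = (\<Sum>l=0..m. (-4) ^ m / fact m * (of_int (S1 m l) * (x / 2) ^ l))"
    by (simp add: gbinomial_mult_fact' atLeast0LessThan falling_factorial_eq_S1_sum
        sum_distrib_left atMost_atLeast0)
  also have "\<dots> = (\<Sum>l=0..m. (-1) ^ m * 2 ^ (2 * m - l) / fact m * of_int (S1 m l) * x ^ l)"
  proof (rule sum.cong [OF refl])
    fix l assume "l \<in> {0..m}"
    then have "(2::'a) ^ (2 * m - l) * 2 ^ l = 4 ^ m"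
      by (simp add: power_add [symmetric] power_mult)
    moreover have "(-4::'a) ^ m = (-1) ^ m * 4 ^ m"
      by (simp add: power_minus [of 4])
    ultimately show "(-4) ^ m / fact m * (of_int (S1 m l) * (x / 2) ^ l) =
        (-1) ^ m * 2 ^ (2 * m - l) / fact m * of_int (S1 m l) * x ^ l"
      by (simp add: power_divide field_simps)
  qed
  finally show ?thesis .
qed

lemma sum_atLeastAtMost_triangle_swap:
  "(\<Sum>m=0..n. \<Sum>l=0..m. f m l) = (\<Sum>l=0..n. \<Sum>m=l..(n::nat). f m l :: 'a::comm_monoid_add)"
  by (induction n) (simp_all add: sum.distrib)

lemma mult_pow_1m4t_half_nth:
  fixes F :: "'a::field_char_0 fps"
  shows "(F * pow_1m4t (x / 2)) $ n =
    (\<Sum>l=0..n. (\<Sum>m=l..n. (-1) ^ m * 2 ^ (2 * m - l) / fact m * of_int (S1 m l) * F $ (n - m)) * x ^ l)"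
proof -
  have "(F * pow_1m4t (x / 2)) $ n = (\<Sum>m=0..n. pow_1m4t (x / 2) $ m * F $ (n - m))"
    by (simp add: mult.commute [of F] fps_mult_nth)
  also have "\<dots> = (\<Sum>m=0..n. \<Sum>l=0..m.
      (-1) ^ m * 2 ^ (2 * m - l) / fact m * of_int (S1 m l) * F $ (n - m) * x ^ l)"
    unfolding pow_1m4t_half_nth sum_distrib_right by (simp add: mult_ac)
  also have "\<dots> = (\<Sum>l=0..n. \<Sum>m=l..n.
      (-1) ^ m * 2 ^ (2 * m - l) / fact m * of_int (S1 m l) * F $ (n - m) * x ^ l)"
    by (rule sum_atLeastAtMost_triangle_swap)
  finally show ?thesis
    by (simp add: sum_distrib_right)
qed

theorem theorem5:
  fixes q lq x :: "'a::field_char_0" and n :: nat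
  assumes "q \<noteq> 1" and "lq \<noteq> 0"
  shows "d_poly n q lq x =
    (\<Sum>l=0..n. (\<Sum>m=l..n. (-1)^m * 2^(2*m-l) / fact m * of_int (S1 m l) * d_num (n - m) q lq) * x^l)"
  unfolding d_poly_def d_num_def by (rule mult_pow_1m4t_half_nth)

end
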